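(* Let $(S,\ast)$ be an adequate commutative partial semigroup. Then $J_\delta(S)$ is a closed two-sided ideal of $\delta S$.
   Context: A partial semigroup is a pair $(S,\ast)$ where $\ast$ is an operation defined on a subset of $S\times S$ such that for all $x,y,z\in S$, $(x\ast y)\ast z=x\ast(y\ast z)$ in the sense that if either side is defined, so is the other and they are equal; it is commutative if $x\ast y=y\ast x$ whenever defined. For $s\in S$, $\phi_S(s)=\{t\in S: s\ast t\text{ is defined}\}$; for $H\in\mathcal{P}_f(S)$ (finite nonempty subsets), $\sigma_S(H)=\bigcap_{s\in H}\phi_S(s)$. $(S,\ast)$ is adequate if $\sigma_S(H)\ne\emptyset$ for all $H\in\mathcal{P}_f(S)$. $\beta S$ is the Stone–Čech compactification of discrete $S$ (ultrafilters on $S$, with basic open sets $\overline{A}=\{p: A\in p\}$), and $\delta S=\bigcap_{x\in S}\overline{\phi_S(x)}\subseteq\beta S$. For $s\in S$ and $A\subseteq S$, $s^{-1}A=\{t\in\phi_S(s): s\ast t\in A\}$; for $p\in\beta S$, $q\in\delta S$, $p\ast q=\{A\subseteq S:\{s\in S: s^{-1}A\in q\}\in p\}$. With this operation $\delta S$ is a compact right topological semigroup. A sequence $\langle y_n\rangle$ in $S$ is adequate if $\prod_{n\in F}y_n$ is defined for every $F\in\mathcal{P}_f(\mathbb{N})$ and for every $K\in\mathcal{P}_f(S)$ there is $m$ with $\prod_{n\in F}y_n\in\sigma_S(K)$ for all $F\in\mathcal{P}_f(\mathbb{N})$ with $\min F\ge m$. $\mathcal{T}_S$ is the set of adequate sequences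 in $S$. For $W\in\mathcal{P}_f(S)$, $a\in S$, $W\ast a=\{w\ast a: w\in W,\ w\ast a\text{ defined}\}$. $A\subseteq S$ is a $J_\delta$-set if for every $F\in\mathcal{P}_f(\mathcal{T}_S)$ and $W\in\mathcal{P}_f(S)$ there exist $a\in\sigma_S(W)$ and $H\in\mathcal{P}_f(\mathbb{N})$ such that for each $f\in F$, $\prod_{t\in H}f(t)\in\sigma_S(W\ast a)$ and $a\ast\prod_{t\in H}f(t)\in A$. $J_\delta(S)=\{p\in\delta S: \text{every } A\in p \text{ is a } J_\delta\text{-set}\}$. *)

theory Defs
  imports Main
begin

text \<open>A partial operation on the ground type 'a (the set S is the universe of 'a);
  None means "undefined".\<close>
type_synonym 'a pop = "'a \<Rightarrow> 'a \<Rightarrow> 'a option"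

definition partial_semigroup :: "'a pop \<Rightarrow> bool" where
  "partial_semigroup op \<longleftrightarrow>
     (\<forall>x y z. Option.bind (op x y) (\<lambda>u. op u z) = Option.bind (op y z) (\<lambda>v. op x v))"

definition commutative_ps :: "'a pop \<Rightarrow> bool" where
  "commutative_ps op \<longleftrightarrow> (\<forall>x y. op x y = op y x)"

definition phiS :: "'a pop \<Rightarrow> 'a \<Rightarrow> 'a set" where
  "phiS op s = {t. op s t \<noteq> None}"

definition sigmaS :: "'a pop \<Rightarrow> 'a set \<Rightarrow> 'a set" where
  "sigmaS op H = (\<Inter>s\<in>H. phiS op s)"

definition adequate :: "'a pop \<Rightarrow> bool" where
  "adequate op \<longleftrightarrow> (\<forall>H. finite H \<and> H \<noteq> {} \<longrightarrow> sigmaS op H \<noteq> {})"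

definition ultrafilter_on :: "'a set set \<Rightarrow> bool" where
  "ultrafilter_on p \<longleftrightarrow>
     UNIV \<in> p \<and> {} \<notin> p \<and>
     (\<forall>A B. A \<in> p \<and> A \<subseteq> B \<longrightarrow> B \<in> p) \<and>
     (\<forall>A B. A \<in> p \<and> B \<in> p \<longrightarrow> A \<inter> B \<in> p) \<and>
     (\<forall>A. A \<in> p \<or> - A \<in> p)"

definition betaS :: "'a set set set" where
  "betaS = {p. ultrafilter_on p}"

definition deltaS :: "'a pop \<Rightarrow> 'a set set set" where
  "deltaS op = {p \<in> betaS. \<forall>x. phiS op x \<in> p}"

definition linv :: "'a pop \<Rightarrow> 'a \<Rightarrow> 'a set \<Rightarrow> 'a set" where
  "linv op s A = {t. \<exists>u. op s t = Some u \<and> u \<in> A}"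

definition ult_mult :: "'a pop \<Rightarrow> 'a set set \<Rightarrow> 'a set set \<Rightarrow> 'a set set" where
  "ult_mult op p q = {A. {s. linv op s A \<in> q} \<in> p}"

text \<open>Closedness of a subset X of delta S in the subspace topology of beta S,
  whose basic open sets are cl A = {p. A \<in> p}.\<close>
definition closed_in_deltaS :: "'a pop \<Rightarrow> 'a set set set \<Rightarrow> bool" where
  "closed_in_deltaS op X \<longleftrightarrow>
     (\<forall>p \<in> deltaS op - X. \<exists>A \<in> p. \<forall>r \<in> X. A \<notin> r)"

fun plprod :: "'a pop \<Rightarrow> 'a list \<Rightarrow> 'a option" where
  "plprod op [] = None"
| "plprod op [x] = Some x"
| "plprod op (x # y # xs) = Option.bind (plprod op (y # xs)) (op x)"

definition seqprod :: "'a pop \<Rightarrow> (nat \<Rightarrow> 'a) \<Rightarrow> nat set \<Rightarrow> 'a option" where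
  "seqprod op y F = plprod op (map y (sorted_list_of_set F))"

definition adequate_seq :: "'a pop \<Rightarrow> (nat \<Rightarrow> 'a) \<Rightarrow> bool" where
  "adequate_seq op y \<longleftrightarrow>
     (\<forall>F. finite F \<and> F \<noteq> {} \<longrightarrow> seqprod op y F \<noteq> None) \<and>
     (\<forall>K. finite K \<and> K \<noteq> {} \<longrightarrow>
        (\<exists>m. \<forall>F. finite F \<and> F \<noteq> {} \<and> Min F \<ge> m \<longrightarrow>
              (\<exists>v. seqprod op y F = Some v \<and> v \<in> sigmaS op K)))"

definition TS :: "'a pop \<Rightarrow> (nat \<Rightarrow> 'a) set" where
  "TS op = {y. adequate_seq op y}"

definition rmult_set :: "'a pop \<Rightarrow> 'a set \<Rightarrow> 'a \<Rightarrow> 'a set" where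
  "rmult_set op W a = {u. \<exists>w\<in>W. op w a = Some u}"

definition J_delta_set :: "'a pop \<Rightarrow> 'a set \<Rightarrow> bool" where
  "J_delta_set op A \<longleftrightarrow>
     (\<forall>F W. finite F \<and> F \<noteq> {} \<and> F \<subseteq> TS op \<and> finite W \<and> W \<noteq> {} \<longrightarrow>
        (\<exists>a \<in> sigmaS op W. \<exists>H. finite H \<and> H \<noteq> {} \<and>
           (\<forall>f \<in> F. \<exists>v. seqprod op f H = Some v \<and>
                 v \<in> sigmaS op (rmult_set op W a) \<and>
                 (\<exists>u. op a v = Some u \<and> u \<in> A))))"

definition J_delta :: "'a pop \<Rightarrow> 'a set set set" where
  "J_delta op = {p \<in> deltaS op. \<forall>A \<in> p. J_delta_set op A}"

end

theory Submission
  imports Defs "HOL-Library.FuncSet" "HOL-Library.Multiset"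
begin

text \<open>Closedness is immediate, because \<open>J\<^sub>\<delta>(S)\<close> consists of the points of \<open>\<delta>S\<close> all of
  whose members are \<open>J\<^sub>\<delta>\<close>-sets. The ideal property is a translation argument: if
  \<open>A \<in> q * p\<close> with \<open>p \<in> J\<^sub>\<delta>(S)\<close>, then \<open>s\<^sup>-\<^sup>1A \<in> p\<close> for some \<open>s \<in> \<sigma>(W)\<close>, and a witness for
  \<open>s\<^sup>-\<^sup>1A\<close> multiplied by \<open>s\<close> is a witness for \<open>A\<close>; if \<open>A \<in> p * q\<close>, a witness for
  \<open>{s. s\<^sup>-\<^sup>1A \<in> q}\<close> is moved into \<open>A\<close> by one element \<open>t\<close> taken from a finite intersection of
  members of \<open>q\<close>, using commutativity.
  Nonemptiness amounts to the finite intersection property of the sets \<open>\<phi>(x)\<close> together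
  with the complements of the non-\<open>J\<^sub>\<delta>\<close>-sets, i.e. no \<open>\<sigma>(K)\<close> is covered by finitely many
  non-\<open>J\<^sub>\<delta>\<close>-sets. This follows from a Gallai-type theorem (one colour class of any finite
  colouring satisfies the \<open>J\<^sub>\<delta>\<close> condition for a given configuration), which in turn is
  obtained from the Hales--Jewett theorem by colouring a word \<open>w\<close> with the colour of
  \<open>a * f\<^sub>w\<^sub>1(n\<^sub>1) * ... * f\<^sub>w\<^sub>N(n\<^sub>N)\<close> for suitably chosen indices \<open>n\<^sub>1 < ... < n\<^sub>N\<close>.\<close>

section \<open>The Hales--Jewett theorem\<close>

definition words :: "nat \<Rightarrow> nat \<Rightarrow> nat list set" where
  "words n k = {w. length w = n \<and> set w \<subseteq> {..<k}}"

text \<open>A combinatorial line in \<open>{..<k}^n\<close> is encoded as a word of length \<open>n\<close> over the letters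
  \<open>Some a\<close> (\<open>a < k\<close>) and a variable \<open>None\<close> occurring at least once; \<open>line_point t x\<close>
  substitutes the letter \<open>x\<close> for the variable.\<close>

definition line_point :: "nat option list \<Rightarrow> nat \<Rightarrow> nat list" where
  "line_point t x = map (\<lambda>z. case z of None \<Rightarrow> x | Some a \<Rightarrow> a) t"

definition is_line :: "nat \<Rightarrow> nat \<Rightarrow> nat option list \<Rightarrow> bool" where
  "is_line n k t \<longleftrightarrow> length t = n \<and> None \<in> set t \<and> (\<forall>a. Some a \<in> set t \<longrightarrow> a < k)"

definition monochromatic :: "(nat list \<Rightarrow> 'c) \<Rightarrow> nat \<Rightarrow> nat option list \<Rightarrow> bool" where
  "monochromatic c k t \<longleftrightarrow> (\<forall>x<k. c (line_point t x) = c (line_point t 0))"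

definition hales_jewett :: "nat \<Rightarrow> nat \<Rightarrow> bool" where
  "hales_jewett k r \<longleftrightarrow>
     (\<exists>N. \<forall>c. (\<forall>w\<in>words N k. c w < r) \<longrightarrow> (\<exists>t. is_line N k t \<and> monochromatic c k t))"

lemma finite_words: "finite (words n k)"
proof -
  have "words n k = {w. set w \<subseteq> {..<k} \<and> length w = n}" by (auto simp: words_def)
  then show ?thesis using finite_lists_length_eq[of "{..<k}" n] by simp
qed

lemma words_append: "u \<in> words n k \<Longrightarrow> v \<in> words m k \<Longrightarrow> u @ v \<in> words (n + m) k"
  by (auto simp: words_def)

lemma length_line_point [simp]: "length (line_point t x) = length t"
  by (simp add: line_point_def)

lemma line_point_append: "line_point (t @ l) x = line_point t x @ line_point l x"
  by (simp add: line_point_def)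

lemma line_point_map_Some: "line_point (map Some w) x = w"
  by (induct w) (auto simp: line_point_def)

lemma line_point_in_words: "is_line n k t \<Longrightarrow> x < K \<Longrightarrow> k \<le> K \<Longrightarrow> line_point t x \<in> words n K"
  by (force simp: is_line_def words_def line_point_def split: option.splits)

lemma monochromatic_Suc:
  "monochromatic c (Suc k) t \<longleftrightarrow> monochromatic c k t \<and> c (line_point t k) = c (line_point t 0)"
  by (auto simp: monochromatic_def less_Suc_eq)

lemma hales_jewett_finite_colours:
  assumes "\<forall>r. hales_jewett k r" and "finite Cs"
  shows "\<exists>N. \<forall>c :: nat list \<Rightarrow> 'c. (\<forall>w\<in>words N k. c w \<in> Cs) \<longrightarrow>
           (\<exists>t. is_line N k t \<and> monochromatic c k t)"
proof -
  obtain e where e: "bij_betw e Cs {0..<card Cs}"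
    using ex_bij_betw_finite_nat[OF assms(2)] by blast
  obtain N where N: "\<forall>c. (\<forall>w\<in>words N k. c w < card Cs) \<longrightarrow>
      (\<exists>t. is_line N k t \<and> monochromatic c k t)"
    using assms(1) unfolding hales_jewett_def by blast
  show ?thesis
  proof (rule exI[of _ N], intro allI impI)
    fix c :: "nat list \<Rightarrow> 'c"
    assume c: "\<forall>w\<in>words N k. c w \<in> Cs"
    then have "\<forall>w\<in>words N k. e (c w) < card Cs"
      using e by (auto simp: bij_betw_def)
    then obtain t where t: "is_line N k t" "monochromatic (\<lambda>w. e (c w)) k t"
      using N[rule_format, of "\<lambda>w. e (c w)"] by blast
    have "c (line_point t x) = c (line_point t 0)" if "x < k" for x
    proof -
      have "line_point t x \<in> words N k" "line_point t 0 \<in> words N k"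
        using line_point_in_words[OF t(1)] that by auto
      then show ?thesis
        using t(2) that c inj_onD[OF bij_betw_imp_inj_on[OF e]] unfolding monochromatic_def by blast
    qed
    with t(1) show "\<exists>t. is_line N k t \<and> monochromatic c k t"
      unfolding monochromatic_def by blast
  qed
qed

text \<open>The colour-focusing step of the Hales--Jewett proof: once \<open>r\<close> lines focused at \<open>f\<close> carry
  pairwise distinct colours, \<open>f\<close> shares its colour with one of them.\<close>

definition focused :: "nat \<Rightarrow> nat \<Rightarrow> (nat list \<Rightarrow> nat) \<Rightarrow> nat list \<Rightarrow> nat option list list \<Rightarrow> bool"
  where
  "focused n k c f ts \<longleftrightarrow> f \<in> words n (Suc k) \<and> distinct (map (\<lambda>t. c (line_point t 0)) ts) \<and>
     (\<forall>t\<in>set ts. is_line n (Suc k) t \<and> line_point t k = f \<and> monochromatic c k t)"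

lemma focused_monochromatic_line:
  assumes "focused n k c f ts" and "c f \<in> (\<lambda>t. c (line_point t 0)) ` set ts"
  shows "\<exists>t. is_line n (Suc k) t \<and> monochromatic c (Suc k) t"
  using assms by (force simp: focused_def monochromatic_Suc)

lemma monochromatic_line_append_point:
  assumes "is_line n K t" and "monochromatic (\<lambda>u. c (u @ v)) K t" and "v \<in> words m K"
  shows "is_line (n + m) K (t @ map Some v) \<and> monochromatic c K (t @ map Some v)"
proof
  show "is_line (n + m) K (t @ map Some v)"
    using assms(1,3) by (auto simp: is_line_def words_def)
  show "monochromatic c K (t @ map Some v)"
    using assms(2) by (simp only: monochromatic_def line_point_append line_point_map_Some)
qed

text \<open>A suffix \<open>v\<close> is coloured by the whole colouring \<open>u \<mapsto> c (u @ v)\<close> of the prefixes.\<close>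

lemma uniform_line_for_prefixes:
  assumes "\<forall>r. hales_jewett k r" and "k \<le> K"
  shows "\<exists>m. \<forall>c. (\<forall>w\<in>words (n + m) K. c w < (r :: nat)) \<longrightarrow>
           (\<exists>l. is_line m k l \<and>
              (\<forall>x<k. \<forall>u\<in>words n K. c (u @ line_point l x) = c (u @ line_point l 0)))"
proof -
  define U where "U = words n K"
  have "finite (U \<rightarrow>\<^sub>E {..<r})"
    unfolding U_def by (rule finite_PiE[OF finite_words]) simp
  then obtain m where m: "\<forall>C :: nat list \<Rightarrow> (nat list \<Rightarrow> nat). (\<forall>v\<in>words m k. C v \<in> U \<rightarrow>\<^sub>E {..<r}) \<longrightarrow>
      (\<exists>l. is_line m k l \<and> monochromatic C k l)"
    using hales_jewett_finite_colours[OF assms(1)] by blast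
  show ?thesis
  proof (rule exI[of _ m], intro allI impI)
    fix c :: "nat list \<Rightarrow> nat" assume c: "\<forall>w\<in>words (n + m) K. c w < r"
    have "restrict (\<lambda>u. c (u @ v)) U \<in> U \<rightarrow>\<^sub>E {..<r}" if "v \<in> words m k" for v
    proof -
      have "v \<in> words m K" using that assms(2) by (auto simp: words_def)
      then show ?thesis using c words_append unfolding U_def by auto
    qed
    then obtain l where l: "is_line m k l" "monochromatic (\<lambda>v. restrict (\<lambda>u. c (u @ v)) U) k l"
      using m[rule_format, of "\<lambda>v. restrict (\<lambda>u. c (u @ v)) U"] by blast
    have "c (u @ line_point l x) = c (u @ line_point l 0)" if "x < k" "u \<in> U" for x u
      using fun_cong[of _ _ u, OF l(2)[unfolded monochromatic_def, rule_format, OF that(1)]] that(2)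
      by simp
    with l(1) show "\<exists>l. is_line m k l \<and>
        (\<forall>x<k. \<forall>u\<in>words n K. c (u @ line_point l x) = c (u @ line_point l 0))"
      unfolding U_def by blast
  qed
qed

lemma monochromatic_append_line:
  assumes t: "is_line n (Suc k) t" and mono: "monochromatic (\<lambda>u. c (u @ line_point l 0)) k t"
    and uniform: "\<forall>x<k. \<forall>u\<in>words n (Suc k). c (u @ line_point l x) = c (u @ line_point l 0)"
  shows "monochromatic c k (t @ l)"
  unfolding monochromatic_def
proof (intro allI impI)
  fix x assume x: "x < k"
  have "line_point t x \<in> words n (Suc k)"
    using x by (intro line_point_in_words[OF t]) simp_all
  then have "c (line_point (t @ l) x) = c (line_point t x @ line_point l 0)"
    unfolding line_point_append using uniform x by blast
  also have "\<dots> = c (line_point (t @ l) 0)"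
    unfolding line_point_append using mono x unfolding monochromatic_def by blast
  finally show "c (line_point (t @ l) x) = c (line_point (t @ l) 0)" .
qed

lemma focused_extend:
  assumes l: "is_line m k l"
    and uniform: "\<forall>x<k. \<forall>u\<in>words n (Suc k). c (u @ line_point l x) = c (u @ line_point l 0)"
    and foc: "focused n k (\<lambda>u. c (u @ line_point l 0)) f ts"
    and new: "c (f @ line_point l 0) \<notin> (\<lambda>t. c (line_point t 0 @ line_point l 0)) ` set ts"
  shows "focused (n + m) k c (f @ line_point l k) (map (\<lambda>t. t @ l) ts @ [map Some f @ l])"
  unfolding focused_def
proof (intro conjI)
  have f: "f \<in> words n (Suc k)" using foc by (simp add: focused_def)
  show "f @ line_point l k \<in> words (n + m) (Suc k)"
    using words_append[OF f line_point_in_words[OF l]] by simp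
  show "distinct (map (\<lambda>t. c (line_point t 0)) (map (\<lambda>t. t @ l) ts @ [map Some f @ l]))"
    using foc new by (simp add: focused_def line_point_append line_point_map_Some comp_def)
  show "\<forall>t'\<in>set (map (\<lambda>t. t @ l) ts @ [map Some f @ l]).
      is_line (n + m) (Suc k) t' \<and> line_point t' k = f @ line_point l k \<and> monochromatic c k t'"
  proof
    fix t' assume "t' \<in> set (map (\<lambda>t. t @ l) ts @ [map Some f @ l])"
    then consider t where "t \<in> set ts" "t' = t @ l" | "t' = map Some f @ l" by auto
    then show "is_line (n + m) (Suc k) t' \<and> line_point t' k = f @ line_point l k \<and> monochromatic c k t'"
    proof cases
      case 1
      have "is_line n (Suc k) t" "line_point t k = f"
        "monochromatic (\<lambda>u. c (u @ line_point l 0)) k t"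
        using foc 1(1) by (auto simp: focused_def)
      then show ?thesis
        using l 1(2) monochromatic_append_line[OF _ _ uniform]
        by (auto simp: is_line_def line_point_append)
    next
      case 2
      have "c (line_point t' x) = c (line_point t' 0)" if "x < k" for x
        unfolding 2 line_point_append line_point_map_Some using uniform that f by blast
      moreover have "is_line (n + m) (Suc k) t'" "line_point t' k = f @ line_point l k"
        using f l 2 by (auto simp: is_line_def words_def line_point_append line_point_map_Some)
      ultimately show ?thesis unfolding monochromatic_def by blast
    qed
  qed
qed

lemma focusing_round:
  assumes l: "is_line m k l"
    and uniform: "\<forall>x<k. \<forall>u\<in>words n (Suc k). c (u @ line_point l x) = c (u @ line_point l 0)"
    and prefix: "(\<exists>t. is_line n (Suc k) t \<and> monochromatic (\<lambda>u. c (u @ line_point l 0)) (Suc k) t) \<or>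
      (\<exists>f ts. length ts = s \<and> focused n k (\<lambda>u. c (u @ line_point l 0)) f ts)"
  shows "(\<exists>t. is_line (n + m) (Suc k) t \<and> monochromatic c (Suc k) t) \<or>
    (\<exists>f ts. length ts = Suc s \<and> focused (n + m) k c f ts)"
proof -
  define c0 where "c0 u = c (u @ line_point l 0)" for u
  have l0: "line_point l 0 \<in> words m (Suc k)" by (rule line_point_in_words[OF l]) simp_all
  have lift: "\<exists>t. is_line (n + m) (Suc k) t \<and> monochromatic c (Suc k) t"
    if "is_line n (Suc k) t" "monochromatic c0 (Suc k) t" for t
    using monochromatic_line_append_point[OF that(1) _ l0] that(2) unfolding c0_def by blast
  show ?thesis
  proof (cases "\<exists>t. is_line n (Suc k) t \<and> monochromatic c0 (Suc k) t")
    case False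
    with prefix obtain f ts where ts: "length ts = s" "focused n k c0 f ts"
      unfolding c0_def by blast
    show ?thesis
    proof (cases "c0 f \<in> (\<lambda>t. c0 (line_point t 0)) ` set ts")
      case True
      then show ?thesis using focused_monochromatic_line[OF ts(2)] lift by blast
    next
      case False
      then have "focused (n + m) k c (f @ line_point l k) (map (\<lambda>t. t @ l) ts @ [map Some f @ l])"
        using focused_extend[OF l uniform] ts(2) unfolding c0_def by blast
      moreover have "length (map (\<lambda>t. t @ l) ts @ [map Some f @ l]) = Suc s"
        using ts(1) by simp
      ultimately show ?thesis by blast
    qed
  qed (use lift in blast)
qed

definition colour_focusing :: "nat \<Rightarrow> nat \<Rightarrow> nat \<Rightarrow> nat \<Rightarrow> bool" where
  "colour_focusing k r s n \<longleftrightarrow> (\<forall>c. (\<forall>w\<in>words n (Suc k). c w < r) \<longrightarrow>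
     (\<exists>t. is_line n (Suc k) t \<and> monochromatic c (Suc k) t) \<or>
     (\<exists>f ts. length ts = s \<and> focused n k c f ts))"

lemma colour_focusing_Suc:
  assumes "\<forall>r. hales_jewett k r" and "colour_focusing k r s n"
  shows "\<exists>m. colour_focusing k r (Suc s) (n + m)"
proof -
  obtain m where m: "\<forall>c. (\<forall>w\<in>words (n + m) (Suc k). c w < r) \<longrightarrow>
      (\<exists>l. is_line m k l \<and>
         (\<forall>x<k. \<forall>u\<in>words n (Suc k). c (u @ line_point l x) = c (u @ line_point l 0)))"
    using uniform_line_for_prefixes[OF assms(1), of "Suc k" n r] by auto
  have "colour_focusing k r (Suc s) (n + m)"
    unfolding colour_focusing_def
  proof (intro allI impI)
    fix c :: "nat list \<Rightarrow> nat"
    assume c: "\<forall>w\<in>words (n + m) (Suc k). c w < r"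
    then obtain l where l: "is_line m k l"
      and uniform: "\<forall>x<k. \<forall>u\<in>words n (Suc k). c (u @ line_point l x) = c (u @ line_point l 0)"
      using m by blast
    have "line_point l 0 \<in> words m (Suc k)" by (rule line_point_in_words[OF l]) simp_all
    then have "\<forall>u\<in>words n (Suc k). c (u @ line_point l 0) < r"
      using c words_append by blast
    then show "(\<exists>t. is_line (n + m) (Suc k) t \<and> monochromatic c (Suc k) t) \<or>
        (\<exists>f ts. length ts = Suc s \<and> focused (n + m) k c f ts)"
      by (intro focusing_round[OF l uniform] assms(2)[unfolded colour_focusing_def, rule_format]) blast
  qed
  then show ?thesis ..
qed

lemma colour_focusing_exists:
  assumes "\<forall>r. hales_jewett k r"
  shows "\<exists>n. colour_focusing k r s n"
proof (induction s)
  case 0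
  have "focused 0 k c [] []" for c by (simp add: focused_def words_def)
  then show ?case unfolding colour_focusing_def by blast
next
  case (Suc s)
  then show ?case using colour_focusing_Suc[OF assms] by blast
qed

lemma hales_jewett_Suc:
  assumes "\<forall>r. hales_jewett k r"
  shows "hales_jewett (Suc k) r"
proof -
  obtain n where n: "colour_focusing k r r n"
    using colour_focusing_exists[OF assms] by blast
  show ?thesis
    unfolding hales_jewett_def
  proof (rule exI[of _ n], intro allI impI)
    fix c :: "nat list \<Rightarrow> nat"
    assume c: "\<forall>w\<in>words n (Suc k). c w < r"
    show "\<exists>t. is_line n (Suc k) t \<and> monochromatic c (Suc k) t"
    proof (cases "\<exists>f ts. length ts = r \<and> focused n k c f ts")
      case True
      then obtain f ts where ts: "length ts = r" "focused n k c f ts" by blast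
      let ?C = "(\<lambda>t. c (line_point t 0)) ` set ts"
      have "?C \<subseteq> {..<r}"
      proof
        fix y assume "y \<in> ?C"
        then obtain t where t: "t \<in> set ts" "y = c (line_point t 0)" by blast
        then have "line_point t 0 \<in> words n (Suc k)"
          using ts(2) t(1) by (intro line_point_in_words) (auto simp: focused_def)
        then show "y \<in> {..<r}" using c t(2) by simp
      qed
      moreover have "card ?C = r"
        using ts distinct_card[of "map (\<lambda>t. c (line_point t 0)) ts"] by (simp add: focused_def)
      ultimately have "?C = {..<r}" by (simp add: card_subset_eq)
      moreover have "c f < r" using c ts(2) by (simp add: focused_def)
      ultimately show ?thesis using focused_monochromatic_line[OF ts(2)] by blast
    next
      case False
      then show ?thesis using n c unfolding colour_focusing_def by blast
    qed
  qed
qed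

theorem hales_jewett_holds: "hales_jewett k r"
proof (induction k arbitrary: r)
  case 0
  have "is_line 1 0 [None]" by (simp add: is_line_def)
  then show ?case unfolding hales_jewett_def monochromatic_def by blast
next
  case (Suc k)
  then show ?case using hales_jewett_Suc by blast
qed

section \<open>Products in partial semigroups\<close>

lemma ps_assoc:
  assumes "partial_semigroup op"
  shows "Option.bind (op x y) (\<lambda>u. op u z) = Option.bind (op y z) (op x)"
  using assms unfolding partial_semigroup_def by (metis (no_types))

lemma ps_assoc_Some:
  assumes "partial_semigroup op" and "op x y = Some u" and "op y z = Some v"
  shows "op u z = op x v"
  using ps_assoc[OF assms(1), of x y z] assms(2,3) by simp

lemma ps_right_commute:
  assumes "partial_semigroup op" and "commutative_ps op" and "op x y = Some d"
  shows "op d z = Option.bind (op x z) (\<lambda>u. op u y)"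
proof -
  have "op d z = Option.bind (op x y) (\<lambda>u. op u z)" using assms(3) by simp
  also have "\<dots> = Option.bind (op z y) (op x)"
    using ps_assoc[OF assms(1)] assms(2) unfolding commutative_ps_def by metis
  also have "\<dots> = Option.bind (op x z) (\<lambda>u. op u y)" by (rule ps_assoc[OF assms(1), symmetric])
  finally show ?thesis .
qed

lemma sigmaS_iff: "t \<in> sigmaS op W \<longleftrightarrow> (\<forall>s\<in>W. op s t \<noteq> None)"
  by (simp add: sigmaS_def phiS_def)

lemma sigmaS_anti: "W1 \<subseteq> W2 \<Longrightarrow> sigmaS op W2 \<subseteq> sigmaS op W1"
  unfolding sigmaS_def by blast

lemma rmult_set_mono: "W1 \<subseteq> W2 \<Longrightarrow> rmult_set op W1 a \<subseteq> rmult_set op W2 a"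
  by (auto simp: rmult_set_def)

lemma finite_rmult_set: "finite W \<Longrightarrow> finite (rmult_set op W a)"
proof -
  assume "finite W"
  have "rmult_set op W a \<subseteq> (\<lambda>w. the (op w a)) ` W" by (force simp: rmult_set_def)
  then show ?thesis using \<open>finite W\<close> finite_subset by blast
qed

lemma rmult_set_assoc_subset:
  assumes "partial_semigroup op" and "op s a' = Some a"
  shows "rmult_set op W a \<subseteq> rmult_set op (rmult_set op W s) a'"
proof
  fix e assume "e \<in> rmult_set op W a"
  then obtain w where w: "w \<in> W" "op w a = Some e" by (auto simp: rmult_set_def)
  then have "Option.bind (op w s) (\<lambda>y. op y a') = Some e"
    using ps_assoc[OF assms(1), of w s a'] assms(2) by simp
  then show "e \<in> rmult_set op (rmult_set op W s) a'"
    using w(1) by (cases "op w s") (auto simp: rmult_set_def)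
qed

lemma sigmaS_mult:
  assumes "partial_semigroup op" and "a \<in> sigmaS op W" and "v \<in> sigmaS op (rmult_set op W a)"
    and "op a v = Some u"
  shows "u \<in> sigmaS op W"
  unfolding sigmaS_iff
proof
  fix w assume "w \<in> W"
  then obtain e where e: "op w a = Some e" using assms(2) by (auto simp: sigmaS_iff)
  then have "op e v \<noteq> None" using assms(3) \<open>w \<in> W\<close> by (auto simp: sigmaS_iff rmult_set_def)
  then show "op w u \<noteq> None" using ps_assoc_Some[OF assms(1) e assms(4)] by simp
qed

lemma sigmaS_rmult_set_right_commute:
  assumes ps: "partial_semigroup op" and cm: "commutative_ps op"
    and v: "v \<in> sigmaS op E" and t: "t \<in> sigmaS op (rmult_set op E v)"
  shows "v \<in> sigmaS op (rmult_set op E t)"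
  unfolding sigmaS_iff
proof
  fix d assume "d \<in> rmult_set op E t"
  then obtain e where e: "e \<in> E" "op e t = Some d" by (auto simp: rmult_set_def)
  then obtain z where z: "op e v = Some z" using v by (auto simp: sigmaS_iff)
  then have "op z t \<noteq> None" using t e(1) by (auto simp: sigmaS_iff rmult_set_def)
  then show "op d v \<noteq> None" using ps_right_commute[OF ps cm e(2), of v] z by simp
qed

lemma plprod_Cons: "xs \<noteq> [] \<Longrightarrow> plprod op (x # xs) = Option.bind (plprod op xs) (op x)"
  by (cases xs) auto

lemma plprod_append:
  assumes "partial_semigroup op" and "xs \<noteq> []" and "ys \<noteq> []"
  shows "plprod op (xs @ ys) = Option.bind (plprod op xs) (\<lambda>u. Option.bind (plprod op ys) (op u))"
  using assms(2)
proof (induction xs rule: list_nonempty_induct)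
  case (single x)
  then show ?case using assms(3) by (simp add: plprod_Cons)
next
  case (cons x xs)
  then show ?case using assms(3) ps_assoc[OF assms(1), of x]
    by (cases "plprod op xs"; cases "plprod op ys") (simp_all add: plprod_Cons)
qed

lemma plprod_snoc:
  assumes "partial_semigroup op" and "xs \<noteq> []"
  shows "plprod op (xs @ [y]) = Option.bind (plprod op xs) (\<lambda>u. op u y)"
  using plprod_append[OF assms, of "[y]"] by simp

lemma plprod_swap:
  assumes "partial_semigroup op" and "commutative_ps op"
  shows "plprod op (x # y # zs) = plprod op (y # x # zs)"
proof (cases "zs = []")
  case True
  then show ?thesis using assms(2) unfolding commutative_ps_def by simp
next
  case False
  have "Option.bind (op y z) (op x) = Option.bind (op x z) (op y)" for z
    using ps_assoc[OF assms(1), of x y z] ps_assoc[OF assms(1), of y x z] assms(2)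
    unfolding commutative_ps_def by metis
  then show ?thesis using False by (cases "plprod op zs") (simp_all add: plprod_Cons)
qed

lemma plprod_move_to_front:
  assumes "partial_semigroup op" and "commutative_ps op"
  shows "plprod op (ys @ x # zs) = plprod op (x # ys @ zs)"
proof (induction ys)
  case (Cons y ys)
  then have "plprod op (y # ys @ x # zs) = plprod op (y # x # ys @ zs)"
    by (simp add: plprod_Cons)
  also have "\<dots> = plprod op (x # y # ys @ zs)" by (rule plprod_swap[OF assms])
  finally show ?case by simp
qed simp

lemma plprod_perm:
  assumes "partial_semigroup op" and "commutative_ps op" and "mset xs = mset ys"
  shows "plprod op xs = plprod op ys"
  using assms(3)
proof (induction xs arbitrary: ys)
  case (Cons x xs)
  then have "x \<in> set ys" by (metis list.set_intros(1) set_mset_mset)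
  then obtain ys1 ys2 where ys: "ys = ys1 @ x # ys2" by (metis split_list)
  then have m: "mset xs = mset (ys1 @ ys2)" using Cons.prems by simp
  moreover have "xs = [] \<longleftrightarrow> ys1 @ ys2 = []" using m by (metis mset_zero_iff)
  ultimately have "plprod op (x # xs) = plprod op (x # ys1 @ ys2)"
    using Cons.IH[OF m] by (cases "xs = []") (simp_all add: plprod_Cons)
  also have "\<dots> = plprod op ys" using plprod_move_to_front[OF assms(1,2)] ys by simp
  finally show ?case .
qed simp

lemma plprod_append_sigmaS:
  assumes ps: "partial_semigroup op" and "xs \<noteq> []" and "ys \<noteq> []" and "W \<noteq> {}"
    and defined: "\<forall>w\<in>W. plprod op (w # xs @ ys) \<noteq> None"
  shows "\<exists>x y u. plprod op xs = Some x \<and> plprod op ys = Some y \<and> op x y = Some u \<and>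
           plprod op (xs @ ys) = Some u \<and> x \<in> sigmaS op W \<and> y \<in> sigmaS op (rmult_set op W x)"
proof -
  have prod_Cons: "plprod op (w # xs @ ys) = Option.bind (plprod op (xs @ ys)) (op w)" for w
    using assms(2) by (simp add: plprod_Cons)
  obtain w0 where "w0 \<in> W" using assms(4) by blast
  then obtain u where u: "plprod op (xs @ ys) = Some u"
    using defined prod_Cons[of w0] by fastforce
  then obtain x y where xy: "plprod op xs = Some x" "plprod op ys = Some y" "op x y = Some u"
    using plprod_append[OF ps assms(2,3)]
    by (cases "plprod op xs"; cases "plprod op ys") auto
  have "\<exists>e. op w x = Some e \<and> op e y \<noteq> None" if "w \<in> W" for w
  proof -
    have "plprod op (w # xs @ ys) \<noteq> None" using defined that by blast
    then have "Option.bind (op w x) (\<lambda>e. op e y) \<noteq> None"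
      using prod_Cons[of w] u xy(3) ps_assoc[OF ps, of w x y] by simp
    then show ?thesis by (cases "op w x") auto
  qed
  then have "x \<in> sigmaS op W" "y \<in> sigmaS op (rmult_set op W x)"
    unfolding sigmaS_iff rmult_set_def by fastforce+
  with xy u show ?thesis by auto
qed

section \<open>A Gallai-type theorem for \<open>J\<^sub>\<delta>\<close>-sets\<close>

definition J_witness :: "'a pop \<Rightarrow> 'a set \<Rightarrow> (nat \<Rightarrow> 'a) set \<Rightarrow> 'a set \<Rightarrow> bool" where
  "J_witness op A F W \<longleftrightarrow> (\<exists>a\<in>sigmaS op W. \<exists>H. finite H \<and> H \<noteq> {} \<and>
     (\<forall>f\<in>F. \<exists>v. seqprod op f H = Some v \<and> v \<in> sigmaS op (rmult_set op W a) \<and>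
        (\<exists>u. op a v = Some u \<and> u \<in> A)))"

lemma J_delta_set_iff_J_witness:
  "J_delta_set op A \<longleftrightarrow>
     (\<forall>F W. finite F \<and> F \<noteq> {} \<and> F \<subseteq> TS op \<and> finite W \<and> W \<noteq> {} \<longrightarrow> J_witness op A F W)"
  by (simp add: J_delta_set_def J_witness_def)

lemma J_witness_mono:
  assumes "J_witness op A F W" and "A \<subseteq> A'" and "F' \<subseteq> F" and "W' \<subseteq> W"
  shows "J_witness op A' F' W'"
proof -
  from assms(1) obtain a H where a: "a \<in> sigmaS op W" and H: "finite H" "H \<noteq> {}"
    and wit: "\<forall>f\<in>F. \<exists>v. seqprod op f H = Some v \<and> v \<in> sigmaS op (rmult_set op W a) \<and>
        (\<exists>u. op a v = Some u \<and> u \<in> A)"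
    unfolding J_witness_def by blast
  have "sigmaS op (rmult_set op W a) \<subseteq> sigmaS op (rmult_set op W' a)"
    using assms(4) by (simp add: sigmaS_anti rmult_set_mono)
  then have "\<forall>f\<in>F'. \<exists>v. seqprod op f H = Some v \<and> v \<in> sigmaS op (rmult_set op W' a) \<and>
      (\<exists>u. op a v = Some u \<and> u \<in> A')"
    using wit assms(2,3) by blast
  moreover have "a \<in> sigmaS op W'" using a sigmaS_anti[OF assms(4)] by blast
  ultimately show ?thesis unfolding J_witness_def using H by blast
qed

lemma J_witness_sigmaS:
  assumes "partial_semigroup op" and "J_witness op A F W"
  shows "J_witness op (A \<inter> sigmaS op W) F W"
proof -
  from assms(2) obtain a H where a: "a \<in> sigmaS op W" and H: "finite H" "H \<noteq> {}"
    and wit: "\<forall>f\<in>F. \<exists>v. seqprod op f H = Some v \<and> v \<in> sigmaS op (rmult_set op W a) \<and>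
        (\<exists>u. op a v = Some u \<and> u \<in> A)"
    unfolding J_witness_def by blast
  then have "\<forall>f\<in>F. \<exists>v. seqprod op f H = Some v \<and> v \<in> sigmaS op (rmult_set op W a) \<and>
      (\<exists>u. op a v = Some u \<and> u \<in> A \<inter> sigmaS op W)"
    using sigmaS_mult[OF assms(1) a] by blast
  then show ?thesis unfolding J_witness_def using a H by blast
qed

lemma adequate_seq_eventually_sigmaS:
  assumes "f \<in> TS op" and "finite R"
  shows "eventually (\<lambda>i. f i \<in> sigmaS op R) sequentially"
proof (cases "R = {}")
  case False
  then obtain m where m: "\<forall>F. finite F \<and> F \<noteq> {} \<and> Min F \<ge> m \<longrightarrow>
      (\<exists>v. seqprod op f F = Some v \<and> v \<in> sigmaS op R)"
    using assms unfolding TS_def adequate_seq_def by blast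
  have "f i \<in> sigmaS op R" if "i \<ge> m" for i
    using m[rule_format, of "{i}"] that by (simp add: seqprod_def)
  then show ?thesis unfolding eventually_sequentially by blast
qed (simp add: sigmaS_def)

definition word_terms :: "(nat \<Rightarrow> 'a) list \<Rightarrow> nat list \<Rightarrow> nat list \<Rightarrow> 'a list" where
  "word_terms fs ix w = map (\<lambda>(j, i). (fs ! j) i) (zip w ix)"

lemma word_terms_snoc:
  "length w = length ix \<Longrightarrow> word_terms fs (ix @ [i]) (w @ [j]) = word_terms fs ix w @ [(fs ! j) i]"
  by (simp add: word_terms_def)

lemma words_Suc_snoc: "w \<in> words (Suc n) k \<Longrightarrow> \<exists>w' j. w = w' @ [j] \<and> w' \<in> words n k \<and> j < k"
  by (cases w rule: rev_cases) (auto simp: words_def)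

lemma indices_defined_word_products:
  assumes ps: "partial_semigroup op" and fs: "set fs \<subseteq> TS op"
    and W: "finite W" and a: "a \<in> sigmaS op W"
  shows "\<exists>ix. length ix = n \<and> sorted_wrt (<) ix \<and>
           (\<forall>w0\<in>W. \<forall>w\<in>words n (length fs). plprod op (w0 # a # word_terms fs ix w) \<noteq> None)"
proof (induction n)
  case 0
  have "plprod op (w0 # a # word_terms fs [] []) \<noteq> None" if "w0 \<in> W" for w0
    using a that by (simp add: word_terms_def sigmaS_iff)
  then show ?case by (intro exI[of _ "[]"]) (simp add: words_def)
next
  case (Suc n)
  then obtain ix where ix: "length ix = n" "sorted_wrt (<) ix"
    "\<forall>w0\<in>W. \<forall>w\<in>words n (length fs). plprod op (w0 # a # word_terms fs ix w) \<noteq> None" by blast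
  define R where "R = (\<lambda>(w0, w). the (plprod op (w0 # a # word_terms fs ix w))) ` (W \<times> words n (length fs))"
  have "finite R" unfolding R_def using W finite_words by blast
  then have "eventually (\<lambda>i. (\<forall>f\<in>set fs. f i \<in> sigmaS op R) \<and> (\<forall>x\<in>set ix. x < i)) sequentially"
    using fs adequate_seq_eventually_sigmaS
    by (intro eventually_conj eventually_ball_finite ballI eventually_gt_at_top) auto
  then obtain i where i: "\<forall>f\<in>set fs. f i \<in> sigmaS op R" "\<forall>x\<in>set ix. x < i"
    unfolding eventually_sequentially by blast
  have "plprod op (w0 # a # word_terms fs (ix @ [i]) w) \<noteq> None"
    if w0: "w0 \<in> W" and w: "w \<in> words (Suc n) (length fs)" for w0 w
  proof -
    obtain w' j where wj: "w = w' @ [j]" "w' \<in> words n (length fs)" "j < length fs"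
      using words_Suc_snoc[OF w] by blast
    obtain u where u: "plprod op (w0 # a # word_terms fs ix w') = Some u"
      using ix(3) w0 wj(2) by blast
    have "u \<in> R" unfolding R_def using w0 wj(2) u by force
    then have "op u ((fs ! j) i) \<noteq> None" using i(1) wj(3) by (simp add: sigmaS_iff)
    moreover have "word_terms fs (ix @ [i]) w = word_terms fs ix w' @ [(fs ! j) i]"
      using wj(1,2) ix(1) by (simp add: word_terms_snoc words_def)
    ultimately show ?thesis
      using plprod_snoc[OF ps, of "w0 # a # word_terms fs ix w'" "(fs ! j) i"] u
      by (simp del: plprod.simps)
  qed
  moreover have "sorted_wrt (<) (ix @ [i])" using ix(2) i(2) by (simp add: sorted_wrt_append)
  ultimately show ?case using ix(1) by (intro exI[of _ "ix @ [i]"]) auto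
qed

lemma seqprod_image_nth:
  assumes "sorted_wrt (<) ix" and "sorted_wrt (<) js" and "set js \<subseteq> {..<length ix}"
  shows "seqprod op f ((!) ix ` set js) = plprod op (map (\<lambda>i. f (ix ! i)) js)"
proof -
  have "sorted_wrt (\<lambda>i i'. ix ! i < ix ! i') js"
  proof (rule sorted_wrt_mono_rel[OF _ assms(2)])
    fix i i' assume "i \<in> set js" "i' \<in> set js" "i < i'"
    then show "ix ! i < ix ! i'" using sorted_wrt_nth_less[OF assms(1)] assms(3) by auto
  qed
  then have "sorted_wrt (<) (map ((!) ix) js)" by (simp add: sorted_wrt_map)
  then have "sorted (map ((!) ix) js)" "distinct (map ((!) ix) js)"
    using strict_sorted_iff by blast+
  then have "sorted_list_of_set (set (map ((!) ix) js)) = map ((!) ix) js"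
    by (metis sorted_list_of_set_sort_remdups distinct_remdups_id sorted_sort_id)
  then show ?thesis by (simp add: seqprod_def comp_def)
qed

lemma nth_line_point: "i < length t \<Longrightarrow> line_point t x ! i = (case t ! i of None \<Rightarrow> x | Some a \<Rightarrow> a)"
  by (simp add: line_point_def)

lemma mset_map_filter_partition:
  "mset (map g xs) = mset (map g (filter P xs)) + mset (map g (filter (\<lambda>x. \<not> P x) xs))"
  by (induct xs) auto

definition var_positions :: "nat option list \<Rightarrow> nat list" where
  "var_positions t = filter (\<lambda>i. t ! i = None) [0..<length t]"

definition fixed_terms :: "(nat \<Rightarrow> 'a) list \<Rightarrow> nat list \<Rightarrow> nat option list \<Rightarrow> 'a list" where
  "fixed_terms fs ix t = map (\<lambda>i. (fs ! the (t ! i)) (ix ! i)) (filter (\<lambda>i. t ! i \<noteq> None) [0..<length t])"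

lemma mset_word_terms_line_point:
  assumes "length t = length ix"
  shows "mset (word_terms fs ix (line_point t j)) =
    mset (fixed_terms fs ix t) + mset (map (\<lambda>i. (fs ! j) (ix ! i)) (var_positions t))"
proof -
  define g where "g i = (fs ! (line_point t j ! i)) (ix ! i)" for i
  have terms: "word_terms fs ix (line_point t j) = map g [0..<length t]"
    using assms by (intro nth_equalityI) (simp_all add: word_terms_def g_def)
  have fixed: "map g (filter (\<lambda>i. t ! i \<noteq> None) [0..<length t]) = fixed_terms fs ix t"
    unfolding fixed_terms_def by (intro map_cong) (auto simp: g_def nth_line_point split: option.split)
  have var: "map g (filter (\<lambda>i. \<not> t ! i \<noteq> None) [0..<length t]) =
      map (\<lambda>i. (fs ! j) (ix ! i)) (var_positions t)"
    unfolding var_positions_def by (intro map_cong) (auto simp: g_def nth_line_point)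
  show ?thesis
    unfolding terms mset_map_filter_partition[of g _ "\<lambda>i. t ! i \<noteq> None"] fixed var ..
qed

lemma plprod_word_terms_line_point:
  assumes ps: "partial_semigroup op" and cm: "commutative_ps op"
    and t: "None \<in> set t" "length t = length ix" and ix: "sorted_wrt (<) ix" and "W \<noteq> {}"
    and defined: "\<forall>w\<in>W. plprod op (w # a # word_terms fs ix (line_point t j)) \<noteq> None"
  shows "\<exists>x y u. plprod op (a # fixed_terms fs ix t) = Some x \<and>
    seqprod op (fs ! j) ((!) ix ` set (var_positions t)) = Some y \<and> op x y = Some u \<and>
    plprod op (a # word_terms fs ix (line_point t j)) = Some u \<and>
    x \<in> sigmaS op W \<and> y \<in> sigmaS op (rmult_set op W x)"
proof -
  define V where "V = map (\<lambda>i. (fs ! j) (ix ! i)) (var_positions t)"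
  have "V \<noteq> []"
    using t(1) unfolding V_def var_positions_def by (auto simp: in_set_conv_nth filter_empty_conv)
  have seq: "seqprod op (fs ! j) ((!) ix ` set (var_positions t)) = plprod op V"
    unfolding V_def var_positions_def using t(2) ix
    by (intro seqprod_image_nth) (auto simp: sorted_wrt_filter)
  have perm: "plprod op (xs @ a # word_terms fs ix (line_point t j)) =
      plprod op (xs @ (a # fixed_terms fs ix t) @ V)" for xs
    using mset_word_terms_line_point[OF t(2), of fs j] unfolding V_def
    by (intro plprod_perm[OF ps cm]) simp
  have "plprod op ([w] @ a # word_terms fs ix (line_point t j)) \<noteq> None" if "w \<in> W" for w
    using defined that by simp
  then have "\<forall>w\<in>W. plprod op (w # (a # fixed_terms fs ix t) @ V) \<noteq> None"
    unfolding perm by simp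
  then show ?thesis
    using plprod_append_sigmaS[OF ps _ \<open>V \<noteq> []\<close> \<open>W \<noteq> {}\<close>, of "a # fixed_terms fs ix t"]
      perm[of "[]"] seq by auto
qed

text \<open>A word \<open>w\<close> is coloured by the colour of \<open>a * f\<^sub>w\<^sub>1(n\<^sub>1) * ... * f\<^sub>w\<^sub>N(n\<^sub>N)\<close>; along a
  monochromatic line the fixed coordinates are absorbed into \<open>a\<close> and the variable ones
  form \<open>H\<close>.\<close>

lemma J_witness_monochromatic:
  fixes c :: "'a \<Rightarrow> 'b"
  assumes ps: "partial_semigroup op" and cm: "commutative_ps op" and ad: "adequate op"
    and F: "finite F" "F \<noteq> {}" "F \<subseteq> TS op" and W: "finite W" "W \<noteq> {}"
    and c: "finite (range c)"
  shows "\<exists>col. J_witness op (c -` {col}) F W"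
proof -
  obtain fs where fs: "set fs = F" using finite_list[OF F(1)] by blast
  define k where "k = length fs"
  obtain N where N: "\<forall>C :: nat list \<Rightarrow> 'b. (\<forall>w\<in>words N k. C w \<in> range c) \<longrightarrow>
      (\<exists>t. is_line N k t \<and> monochromatic C k t)"
    using hales_jewett_finite_colours[OF _ c] hales_jewett_holds by blast
  obtain a where a: "a \<in> sigmaS op W" using ad W unfolding adequate_def by blast
  obtain ix where ix: "length ix = N" "sorted_wrt (<) ix"
    "\<forall>w0\<in>W. \<forall>w\<in>words N k. plprod op (w0 # a # word_terms fs ix w) \<noteq> None"
    using indices_defined_word_products[OF ps _ W(1) a, of fs N] fs F(3) unfolding k_def by auto
  define C where "C w = c (the (plprod op (a # word_terms fs ix w)))" for w
  obtain t where t: "is_line N k t" "monochromatic C k t"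
    using N[rule_format, of C] unfolding C_def by blast
  have t': "None \<in> set t" "length t = length ix" using t(1) ix(1) by (auto simp: is_line_def)
  have "\<forall>w\<in>W. plprod op (w # a # word_terms fs ix (line_point t j)) \<noteq> None" if "j < k" for j
    using line_point_in_words[OF t(1) that] ix(3) by simp
  note split = plprod_word_terms_line_point[OF ps cm t' ix(2) W(2) this]
  have "0 < k" using fs F(2) unfolding k_def by auto
  then obtain a' where a': "plprod op (a # fixed_terms fs ix t) = Some a'" "a' \<in> sigmaS op W"
    using split[of 0] by blast
  have wit: "\<exists>v. seqprod op f ((!) ix ` set (var_positions t)) = Some v \<and>
      v \<in> sigmaS op (rmult_set op W a') \<and> (\<exists>u. op a' v = Some u \<and> u \<in> c -` {C (line_point t 0)})"
    if f: "f \<in> F" for f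
  proof -
    obtain j where j: "j < k" "f = fs ! j" using f fs unfolding k_def by (auto simp: in_set_conv_nth)
    obtain x y u where "plprod op (a # fixed_terms fs ix t) = Some x"
      "seqprod op (fs ! j) ((!) ix ` set (var_positions t)) = Some y" "op x y = Some u"
      "plprod op (a # word_terms fs ix (line_point t j)) = Some u" "y \<in> sigmaS op (rmult_set op W x)"
      using split[OF j(1)] by blast
    moreover have "C (line_point t j) = C (line_point t 0)"
      using t(2) j(1) unfolding monochromatic_def by blast
    ultimately show ?thesis using a'(1) j(2) by (auto simp: C_def)
  qed
  have "J_witness op (c -` {C (line_point t 0)}) F W"
    unfolding J_witness_def
  proof (intro bexI[OF _ a'(2)] exI[of _ "(!) ix ` set (var_positions t)"] conjI ballI)
    show "(!) ix ` set (var_positions t) \<noteq> {}"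
      using t'(1) by (auto simp: var_positions_def in_set_conv_nth)
  qed (use wit in simp_all)
  then show ?thesis ..
qed

section \<open>Ultrafilters and the product on \<open>\<delta>S\<close>\<close>

definition fip :: "'a set set \<Rightarrow> bool" where
  "fip P \<longleftrightarrow> (\<forall>Q. finite Q \<and> Q \<noteq> {} \<and> Q \<subseteq> P \<longrightarrow> \<Inter>Q \<noteq> {})"

lemma fip_Union_chain:
  assumes "C \<noteq> {}" and "subset.chain A C" and "\<forall>X\<in>C. fip X"
  shows "fip (\<Union>C)"
  unfolding fip_def
proof (intro allI impI)
  fix Q assume Q: "finite Q \<and> Q \<noteq> {} \<and> Q \<subseteq> \<Union>C"
  then obtain X where "X \<in> C" "Q \<subseteq> X"
    using finite_subset_Union_chain[of Q C A] assms(1,2) by blast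
  then show "\<Inter>Q \<noteq> {}" using assms(3) Q unfolding fip_def by blast
qed

lemma fip_insert_or_insert_compl:
  assumes "fip M"
  shows "fip (insert S M) \<or> fip (insert (-S) M)"
proof (rule ccontr)
  assume "\<not> ?thesis"
  then obtain Q1 Q2 where Q1: "finite Q1" "Q1 \<subseteq> insert S M" "\<Inter>Q1 = {}"
    and Q2: "finite Q2" "Q2 \<subseteq> insert (-S) M" "\<Inter>Q2 = {}"
    unfolding fip_def by blast
  define Q where "Q = (Q1 - {S}) \<union> (Q2 - {-S})"
  have "\<Inter>(insert S Q) \<subseteq> \<Inter>Q1" "\<Inter>(insert (-S) Q) \<subseteq> \<Inter>Q2"
    using Q1(2) Q2(2) unfolding Q_def by blast+
  then have "\<Inter>Q = {}" using Q1(3) Q2(3) by auto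
  moreover have "finite Q" "Q \<subseteq> M" using Q1 Q2 unfolding Q_def by auto
  ultimately show False using assms unfolding fip_def by (cases "Q = {}") auto
qed

lemma ultrafilter_on_if_fip_complete:
  assumes "fip M" and complete: "\<forall>S. S \<in> M \<or> -S \<in> M"
  shows "ultrafilter_on M"
proof -
  have disjoint: "\<Inter>Q \<noteq> {}" if "finite Q" "Q \<noteq> {}" "Q \<subseteq> M" for Q
    using assms(1) that unfolding fip_def by blast
  show ?thesis
    unfolding ultrafilter_on_def
  proof (intro conjI allI impI)
    show "{} \<notin> M" using disjoint[of "{{}}"] by auto
    then show "UNIV \<in> M" using complete by force
    show "S \<in> M \<or> - S \<in> M" for S using complete by blast
  next
    fix X Y assume "X \<in> M \<and> X \<subseteq> Y"
    then show "Y \<in> M" using complete disjoint[of "{X, -Y}"] by auto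
  next
    fix X Y assume "X \<in> M \<and> Y \<in> M"
    then show "X \<inter> Y \<in> M" using complete disjoint[of "{X, Y, -(X \<inter> Y)}"] by auto
  qed
qed

lemma ultrafilter_exists:
  assumes "fip G"
  shows "\<exists>p. ultrafilter_on p \<and> G \<subseteq> p"
proof -
  define A where "A = {P. G \<subseteq> P \<and> fip P}"
  have "\<exists>U\<in>A. \<forall>X\<in>C. X \<subseteq> U" if "C \<in> chains A" for C
  proof (cases "C = {}")
    case False
    have "subset.chain A C" using that by (simp add: chains_alt_def)
    then have "\<Union>C \<in> A"
      using fip_Union_chain[OF False] False unfolding A_def subset.chain_def by blast
    then show ?thesis by blast
  qed (use assms in \<open>auto simp: A_def\<close>)
  then obtain M where M: "M \<in> A" "\<forall>X\<in>A. M \<subseteq> X \<longrightarrow> X = M"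
    using Zorn_Lemma2[of A] by blast
  have "S \<in> M \<or> -S \<in> M" for S
    using fip_insert_or_insert_compl[of M S] M unfolding A_def by blast
  then show ?thesis using ultrafilter_on_if_fip_complete M(1) unfolding A_def by blast
qed

lemma uf_int_iff: "ultrafilter_on p \<Longrightarrow> A \<inter> B \<in> p \<longleftrightarrow> A \<in> p \<and> B \<in> p"
  unfolding ultrafilter_on_def by blast

lemma uf_compl_iff: "ultrafilter_on p \<Longrightarrow> -A \<in> p \<longleftrightarrow> A \<notin> p"
  unfolding ultrafilter_on_def by (metis Int_empty_right Compl_disjoint)

lemma uf_nonempty: "ultrafilter_on p \<Longrightarrow> A \<in> p \<Longrightarrow> \<exists>x. x \<in> A"
  unfolding ultrafilter_on_def by blast

lemma uf_Inter:
  assumes "ultrafilter_on p" and "finite \<A>" and "\<A> \<subseteq> p"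
  shows "\<Inter>\<A> \<in> p"
  using assms(2,3)
proof (induction \<A> rule: finite_induct)
  case empty then show ?case using assms(1) by (simp add: ultrafilter_on_def)
next
  case (insert A \<A>) then show ?case using uf_int_iff[OF assms(1)] by simp
qed

lemma ultrafilter_on_Boolean_preimage:
  assumes "ultrafilter_on p" and "Q UNIV = UNIV"
    and inter: "\<And>A B. Q (A \<inter> B) = Q A \<inter> Q B" and compl: "\<And>A. Q (-A) = - Q A"
  shows "ultrafilter_on {A. Q A \<in> p}"
  unfolding ultrafilter_on_def mem_Collect_eq
proof (intro conjI allI impI)
  show "Q UNIV \<in> p" using assms(1,2) by (simp add: ultrafilter_on_def)
  show "Q {} \<notin> p" using assms(1,2) compl[of UNIV] by (simp add: ultrafilter_on_def)
  show "Q A \<in> p \<or> Q (- A) \<in> p" for A using assms(1) compl by (simp add: ultrafilter_on_def)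
  show "Q A \<in> p \<and> Q B \<in> p \<Longrightarrow> Q (A \<inter> B) \<in> p" for A B using uf_int_iff[OF assms(1)] inter by simp
  show "Q B \<in> p" if "Q A \<in> p \<and> A \<subseteq> B" for A B
  proof -
    have "Q A = Q A \<inter> Q B" using inter[of A B] that by (simp add: Int_absorb2)
    then show ?thesis using that uf_int_iff[OF assms(1)] by metis
  qed
qed

lemma deltaS_ultrafilter: "p \<in> deltaS op \<Longrightarrow> ultrafilter_on p"
  by (simp add: deltaS_def betaS_def)

lemma sigmaS_in_deltaS: "p \<in> deltaS op \<Longrightarrow> finite K \<Longrightarrow> sigmaS op K \<in> p"
  unfolding sigmaS_def by (rule uf_Inter[OF deltaS_ultrafilter]) (auto simp: deltaS_def)

lemma linv_phiS:
  assumes "partial_semigroup op" and "op x s = Some y"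
  shows "linv op s (phiS op x) = phiS op s \<inter> phiS op y"
proof -
  have "op y t = Option.bind (op s t) (op x)" for t
    using ps_assoc[OF assms(1), of x s t] assms(2) by simp
  then show ?thesis by (force simp: linv_def phiS_def split: Option.bind_split)
qed

lemma linv_Int: "linv op s (A \<inter> B) = linv op s A \<inter> linv op s B"
  by (auto simp: linv_def)

lemma ult_mult_ultrafilter:
  assumes p: "ultrafilter_on p" and q: "q \<in> deltaS op"
  shows "ultrafilter_on (ult_mult op p q)"
proof -
  have uq: "ultrafilter_on q" and phi: "\<And>s. phiS op s \<in> q"
    using q by (simp_all add: deltaS_def betaS_def)
  define Q where "Q A = {s. linv op s A \<in> q}" for A
  have "linv op s UNIV = phiS op s" for s by (auto simp: linv_def phiS_def)
  then have "Q UNIV = UNIV" using phi unfolding Q_def by simp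
  moreover have "Q (A \<inter> B) = Q A \<inter> Q B" for A B
    unfolding Q_def linv_Int using uf_int_iff[OF uq] by auto
  moreover have "Q (-A) = - Q A" for A
  proof -
    have "linv op s (-A) = phiS op s \<inter> - linv op s A" for s by (auto simp: linv_def phiS_def)
    then show ?thesis unfolding Q_def using uf_int_iff[OF uq] uf_compl_iff[OF uq] phi by auto
  qed
  ultimately have "ultrafilter_on {A. Q A \<in> p}" by (rule ultrafilter_on_Boolean_preimage[OF p])
  then show ?thesis by (simp add: ult_mult_def Q_def)
qed

lemma ult_mult_deltaS:
  assumes ps: "partial_semigroup op" and p: "p \<in> deltaS op" and q: "q \<in> deltaS op"
  shows "ult_mult op p q \<in> deltaS op"
proof -
  have "phiS op x \<in> ult_mult op p q" for x
  proof -
    have "phiS op x \<subseteq> {s. linv op s (phiS op x) \<in> q}"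
    proof
      fix s assume "s \<in> phiS op x"
      then obtain y where y: "op x s = Some y" by (auto simp: phiS_def)
      have "phiS op s \<inter> phiS op y \<in> q"
        using q uf_int_iff[OF deltaS_ultrafilter[OF q]] by (simp add: deltaS_def)
      then show "s \<in> {s. linv op s (phiS op x) \<in> q}" using linv_phiS[OF ps y] by simp
    qed
    moreover have "phiS op x \<in> p" using p by (simp add: deltaS_def)
    ultimately show ?thesis
      using deltaS_ultrafilter[OF p] unfolding ult_mult_def ultrafilter_on_def by blast
  qed
  then show ?thesis
    using ult_mult_ultrafilter[OF deltaS_ultrafilter[OF p] q] by (simp add: deltaS_def betaS_def)
qed

lemma J_witness_linv:
  assumes ps: "partial_semigroup op" and J: "J_delta_set op (linv op s A)"
    and F: "finite F" "F \<noteq> {}" "F \<subseteq> TS op" and W: "finite W" and s: "s \<in> sigmaS op W"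
  shows "J_witness op A F W"
proof -
  define W' where "W' = insert s (rmult_set op W s)"
  have "finite W'" "W' \<noteq> {}" using W finite_rmult_set unfolding W'_def by auto
  then have "J_witness op (linv op s A) F W'"
    using J F unfolding J_delta_set_iff_J_witness by blast
  then obtain a' H where a': "a' \<in> sigmaS op W'" and H: "finite H" "H \<noteq> {}"
    and wit: "\<forall>f\<in>F. \<exists>v. seqprod op f H = Some v \<and> v \<in> sigmaS op (rmult_set op W' a') \<and>
        (\<exists>u. op a' v = Some u \<and> u \<in> linv op s A)"
    unfolding J_witness_def by blast
  obtain a where sa: "op s a' = Some a" using a' unfolding W'_def sigmaS_iff by auto
  have sub: "sigmaS op (rmult_set op W' a') \<subseteq> sigmaS op (rmult_set op W a)"
    using rmult_set_assoc_subset[OF ps sa] unfolding W'_def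
    by (intro sigmaS_anti) (auto simp: rmult_set_def)
  have "a' \<in> sigmaS op (rmult_set op W s)" using a' sigmaS_anti[of _ W'] unfolding W'_def by blast
  then have "a \<in> sigmaS op W" using sigmaS_mult[OF ps s _ sa] by blast
  moreover have "\<exists>v. seqprod op f H = Some v \<and> v \<in> sigmaS op (rmult_set op W a) \<and>
      (\<exists>u. op a v = Some u \<and> u \<in> A)" if "f \<in> F" for f
  proof -
    obtain v u where v: "seqprod op f H = Some v" "v \<in> sigmaS op (rmult_set op W' a')"
      "op a' v = Some u" "u \<in> linv op s A" using wit \<open>f \<in> F\<close> by blast
    have "op a v = op s u" using ps_assoc_Some[OF ps sa v(3)] .
    then show ?thesis using v sub unfolding linv_def by auto
  qed
  ultimately show ?thesis unfolding J_witness_def using H by blast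
qed

lemma J_delta_set_ult_mult_left:
  fixes op :: "'a pop"
  assumes ps: "partial_semigroup op" and p: "p \<in> J_delta op" and q: "q \<in> deltaS op"
    and A: "A \<in> ult_mult op q p"
  shows "J_delta_set op A"
  unfolding J_delta_set_iff_J_witness
proof (intro allI impI)
  fix F :: "(nat \<Rightarrow> 'a) set" and W :: "'a set"
  assume FW: "finite F \<and> F \<noteq> {} \<and> F \<subseteq> TS op \<and> finite W \<and> W \<noteq> {}"
  have "{s. linv op s A \<in> p} \<inter> sigmaS op W \<in> q"
    using A sigmaS_in_deltaS[OF q] FW uf_int_iff[OF deltaS_ultrafilter[OF q]]
    by (simp add: ult_mult_def)
  then obtain s where s: "linv op s A \<in> p" "s \<in> sigmaS op W"
    using uf_nonempty[OF deltaS_ultrafilter[OF q]] by blast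
  then have "J_delta_set op (linv op s A)" using p by (simp add: J_delta_def)
  then show "J_witness op A F W" using J_witness_linv[OF ps] FW s(2) by blast
qed

lemma J_witness_linv_right:
  assumes ps: "partial_semigroup op" and cm: "commutative_ps op" and q: "q \<in> deltaS op"
    and J: "J_witness op {s. linv op s A \<in> q} F W" and F: "finite F" and W: "finite W"
  shows "J_witness op A F W"
proof -
  obtain a H V U where a: "a \<in> sigmaS op W" and H: "finite H" "H \<noteq> {}"
    and VU: "\<forall>f\<in>F. seqprod op f H = Some (V f) \<and> V f \<in> sigmaS op (rmult_set op W a) \<and>
        op a (V f) = Some (U f) \<and> linv op (U f) A \<in> q"
    using J unfolding J_witness_def by (metis (mono_tags, lifting) mem_Collect_eq)
  define E where "E = rmult_set op W a"
  define K where "K = insert a (E \<union> (\<Union>f\<in>F. rmult_set op E (V f)))"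
  have "finite E" unfolding E_def using finite_rmult_set[OF W] .
  then have "finite K" unfolding K_def using F by (simp add: finite_rmult_set)
  moreover have "\<Inter>((\<lambda>f. linv op (U f) A) ` F) \<in> q"
    using VU F by (intro uf_Inter[OF deltaS_ultrafilter[OF q]]) auto
  ultimately have "sigmaS op K \<inter> \<Inter>((\<lambda>f. linv op (U f) A) ` F) \<in> q"
    using sigmaS_in_deltaS[OF q] uf_int_iff[OF deltaS_ultrafilter[OF q]] by blast
  then obtain t where t: "t \<in> sigmaS op K" "\<forall>f\<in>F. t \<in> linv op (U f) A"
    using uf_nonempty[OF deltaS_ultrafilter[OF q]] by blast
  have tE: "t \<in> sigmaS op E" using t(1) sigmaS_anti[of E K] unfolding K_def by blast
  have tEV: "t \<in> sigmaS op (rmult_set op E (V f))" if "f \<in> F" for f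
    using t(1) that sigmaS_anti[of "rmult_set op E (V f)" K] unfolding K_def by blast
  obtain a2 where a2: "op a t = Some a2" using t(1) unfolding K_def sigmaS_iff by auto
  have "a2 \<in> sigmaS op W" using sigmaS_mult[OF ps a _ a2] tE unfolding E_def by blast
  moreover have "\<exists>v. seqprod op f H = Some v \<and> v \<in> sigmaS op (rmult_set op W a2) \<and>
      (\<exists>u. op a2 v = Some u \<and> u \<in> A)" if f: "f \<in> F" for f
  proof -
    have "V f \<in> sigmaS op (rmult_set op E t)"
      using sigmaS_rmult_set_right_commute[OF ps cm _ tEV[OF f]] VU f unfolding E_def by blast
    then have "V f \<in> sigmaS op (rmult_set op W a2)"
      using sigmaS_anti[OF rmult_set_assoc_subset[OF ps a2]] unfolding E_def by blast
    moreover obtain z where "op (U f) t = Some z" "z \<in> A" using t(2) f unfolding linv_def by blast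
    moreover have "op a2 (V f) = Option.bind (op a (V f)) (\<lambda>u. op u t)"
      by (rule ps_right_commute[OF ps cm a2])
    ultimately show ?thesis using VU f by auto
  qed
  ultimately show ?thesis unfolding J_witness_def using H by blast
qed

lemma J_delta_set_ult_mult_right:
  assumes ps: "partial_semigroup op" and cm: "commutative_ps op"
    and p: "p \<in> J_delta op" and q: "q \<in> deltaS op" and A: "A \<in> ult_mult op p q"
  shows "J_delta_set op A"
proof -
  have "J_delta_set op {s. linv op s A \<in> q}" using p A by (simp add: J_delta_def ult_mult_def)
  then show ?thesis
    using J_witness_linv_right[OF ps cm q] unfolding J_delta_set_iff_J_witness by blast
qed

lemma J_witness_nonempty:
  assumes "J_witness op A F W" and "F \<noteq> {}"
  shows "A \<noteq> {}"
proof -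
  obtain f where "f \<in> F" using assms(2) by blast
  then show ?thesis using assms(1) unfolding J_witness_def by fast
qed

text \<open>Colour each point by the set of members of \<open>BB\<close> containing it. The points of a witness lie
  in \<open>\<sigma>(W) \<subseteq> \<sigma>(K)\<close>, so a monochromatic witness lies inside a single member of \<open>BB\<close>.\<close>

lemma sigmaS_not_subset_Union_non_J_delta:
  fixes op :: "'a pop"
  assumes ps: "partial_semigroup op" and cm: "commutative_ps op" and ad: "adequate op"
    and K: "finite K" and BB: "finite BB" "BB \<noteq> {}" and non_J: "\<forall>B\<in>BB. \<not> J_delta_set op B"
  shows "\<not> sigmaS op K \<subseteq> \<Union>BB"
proof
  assume cover: "sigmaS op K \<subseteq> \<Union>BB"
  have "\<exists>F W. finite F \<and> F \<noteq> {} \<and> F \<subseteq> TS op \<and> finite W \<and> W \<noteq> {} \<and>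
      \<not> J_witness op B F W" if "B \<in> BB" for B
    using non_J that unfolding J_delta_set_iff_J_witness by blast
  then obtain FF WW where FW: "\<forall>B\<in>BB. finite (FF B) \<and> FF B \<noteq> {} \<and> FF B \<subseteq> TS op \<and>
      finite (WW B) \<and> WW B \<noteq> {} \<and> \<not> J_witness op B (FF B) (WW B)"
    by metis
  define F where "F = \<Union>(FF ` BB)"
  define W where "W = \<Union>(WW ` BB) \<union> K"
  define c where "c u = {B \<in> BB. u \<in> B}" for u
  have "range c \<subseteq> Pow BB" unfolding c_def by auto
  then have c: "finite (range c)" using BB(1) by (simp add: finite_subset)
  have F: "finite F" "F \<noteq> {}" "F \<subseteq> TS op" and W: "finite W" "W \<noteq> {}"
    using FW BB K unfolding F_def W_def by auto
  obtain col where "J_witness op (c -` {col}) F W"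
    using J_witness_monochromatic[OF ps cm ad F W c] by blast
  then have col: "J_witness op (c -` {col} \<inter> sigmaS op W) F W" by (rule J_witness_sigmaS[OF ps])
  have "c -` {col} \<inter> sigmaS op W \<noteq> {}" by (rule J_witness_nonempty[OF col F(2)])
  then obtain u where u: "c u = col" "u \<in> sigmaS op W" by blast
  have "sigmaS op W \<subseteq> sigmaS op K" unfolding W_def by (rule sigmaS_anti) blast
  then obtain B where B: "B \<in> BB" "u \<in> B" using u(2) cover by blast
  then have "c -` {col} \<inter> sigmaS op W \<subseteq> B" using u(1) unfolding c_def by auto
  moreover have "FF B \<subseteq> F" "WW B \<subseteq> W" using B(1) unfolding F_def W_def by auto
  ultimately have "J_witness op B (FF B) (WW B)" by (rule J_witness_mono[OF col])
  then show False using FW B(1) by blast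
qed

lemma fip_phiS_compl_non_J_delta:
  assumes ps: "partial_semigroup op" and cm: "commutative_ps op" and ad: "adequate op"
  shows "fip (range (phiS op) \<union> uminus ` {B. \<not> J_delta_set op B})"
  unfolding fip_def
proof (intro allI impI)
  fix Q assume Q: "finite Q \<and> Q \<noteq> {} \<and> Q \<subseteq> range (phiS op) \<union> uminus ` {B. \<not> J_delta_set op B}"
  obtain K where K: "finite K" "Q \<inter> range (phiS op) = phiS op ` K"
    using finite_subset_image[of "Q \<inter> range (phiS op)" "phiS op" UNIV] Q by blast
  define BB where "BB = uminus ` (Q - range (phiS op))"
  have BB: "finite BB" "\<forall>B\<in>BB. \<not> J_delta_set op B" using Q unfolding BB_def by auto
  have "\<exists>s. s \<in> sigmaS op K \<and> s \<notin> \<Union>BB"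
  proof (cases "BB = {}")
    case True
    have "sigmaS op K \<noteq> {}"
      using ad K(1) unfolding adequate_def by (cases "K = {}") (auto simp: sigmaS_def)
    then show ?thesis using True by blast
  next
    case False
    then show ?thesis using sigmaS_not_subset_Union_non_J_delta[OF ps cm ad K(1) BB(1) False BB(2)]
      by blast
  qed
  then obtain s where s: "s \<in> sigmaS op K" "s \<notin> \<Union>BB" by blast
  have "s \<in> X" if "X \<in> Q" for X
  proof (cases "X \<in> range (phiS op)")
    case True
    then show ?thesis using s(1) K(2) that unfolding sigmaS_def by blast
  next
    case False
    then have "-X \<in> BB" using that unfolding BB_def by blast
    then show ?thesis using s(2) by blast
  qed
  then show "\<Inter>Q \<noteq> {}" by blast
qed

lemma J_delta_nonempty:
  assumes "partial_semigroup op" and "commutative_ps op" and "adequate op"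
  shows "J_delta op \<noteq> {}"
proof -
  obtain p where p: "ultrafilter_on p" "range (phiS op) \<union> uminus ` {B. \<not> J_delta_set op B} \<subseteq> p"
    using ultrafilter_exists[OF fip_phiS_compl_non_J_delta[OF assms]] by blast
  then have "p \<in> deltaS op" unfolding deltaS_def betaS_def by blast
  moreover have "J_delta_set op A" if "A \<in> p" for A
  proof (rule ccontr)
    assume "\<not> J_delta_set op A"
    then have "-A \<in> p" using p(2) by blast
    then show False using that p(1) uf_compl_iff by blast
  qed
  ultimately show ?thesis unfolding J_delta_def by blast
qed

lemma closed_in_deltaS_J_delta: "closed_in_deltaS op (J_delta op)"
  unfolding closed_in_deltaS_def J_delta_def by blast

theorem theorem3p4:
  fixes op :: "'a pop"
  assumes "partial_semigroup op" and "commutative_ps op" and "adequate op"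
  shows "J_delta op \<noteq> {} \<and> J_delta op \<subseteq> deltaS op \<and>
         (\<forall>p \<in> J_delta op. \<forall>q \<in> deltaS op.
             ult_mult op p q \<in> J_delta op \<and> ult_mult op q p \<in> J_delta op) \<and>
         closed_in_deltaS op (J_delta op)"
proof -
  have ideal: "ult_mult op p q \<in> J_delta op \<and> ult_mult op q p \<in> J_delta op"
    if p: "p \<in> J_delta op" and q: "q \<in> deltaS op" for p q
  proof -
    have "p \<in> deltaS op" using p by (simp add: J_delta_def)
    then show ?thesis
      using ult_mult_deltaS[OF assms(1)] q J_delta_set_ult_mult_right[OF assms(1,2) p q]
        J_delta_set_ult_mult_left[OF assms(1) p q] unfolding J_delta_def by blast
  qed
  have "J_delta op \<subseteq> deltaS op" by (auto simp: J_delta_def)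
  then show ?thesis using J_delta_nonempty[OF assms] ideal closed_in_deltaS_J_delta by blast
qed

end
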